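(* With notation as below, for all $M\ge1$, $0\le N\le M-1$, all $1\le x_1<\cdots<x_N\le M$, all $1\le y_1<\cdots<y_{N+1}\le M$ and all nonzero $u\in\mathbb{C}$, $$\langle x^\vee_1\cdots x^\vee_N|\,C(u)\,|y^\vee_1\cdots y^\vee_{N+1}\rangle=\langle y_1\cdots y_{N+1}|\,B(u)\,|x_1\cdots x_N\rangle,$$ where $x^\vee_j=M+1-x_{N+1-j}$ and $y^\vee_j=M+1-y_{N+2-j}$. Consequently, if $x_j=\lambda_{N-j+1}+j$, $y_j=\mu_{N-j+2}+j$ for integer sequences $M-N\ge\lambda_1\ge\cdots\ge\lambda_N\ge0$, $M-N-1\ge\mu_1\ge\cdots\ge\mu_{N+1}\ge0$, and $z=-\beta^{-1}-u^{-2}$, then $$(-\beta)^Nu^{1-M}\langle x_1\cdots x_N|C(u)|y_1\cdots y_{N+1}\rangle=G_{\mu^\vee/\lambda^\vee}(z;\beta),$$ with $\lambda^\vee_j=M-N-\lambda_{N+1-j}$, $\mu^\vee_j=M-N-1-\mu_{N+2-j}$.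
   Context: Fix nonzero $\beta\in\mathbb{C}$. Let $W_a=V_j=\mathbb{C}^2$ with basis $|0\rangle=(1,0)^T$, $|1\rangle=(0,1)^T$; $s=|0\rangle\langle0|$, $n=|1\rangle\langle1|$, $\sigma^+=|0\rangle\langle1|$, $\sigma^-=|1\rangle\langle0|$, subscripts indicating the tensor factor. $L_{aj}(u)=u\,s_as_j+\sigma_a^-\sigma_j^++\sigma_a^+\sigma_j^-+(-\beta^{-1}u-u^{-1})n_as_j-\beta^{-1}u\,n_an_j$ on $W_a\otimes V_j$; $T_a(u)=L_{aM}(u)\cdots L_{a1}(u)$ on $W_a\otimes V_1\otimes\cdots\otimes V_M$; $B(u)={}_a\langle0|T_a(u)|1\rangle_a$ and $C(u)={}_a\langle1|T_a(u)|0\rangle_a$. $|x_1\cdots x_N\rangle$ ($x_1<\cdots<x_N$) is the basis vector with $|1\rangle$ at the factors $x_j$ and $|0\rangle$ elsewhere; $\langle x_1\cdots x_N|$ is the dual basis vector. For a sequence $\mu$ with $N+1$ entries and $\lambda$ with $N$ entries, $G_{\mu/\lambda}(z;\beta)=z^{|\mu|-|\lambda|}\prod_{j=1}^N(1+\beta z-\beta z\,\delta_{\mu_{j+1},\lambda_j})$ if $\mu_j\ge\lambda_j\ge\mu_{j+1}$ for all $1\le j\le N$, and $0$ otherwise, where $|\lambda|=\sum\lambda_j$. *)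

theory Defs
  imports Complex_Main
begin

text \<open>Local basis states are encoded as booleans: False = |0>, True = |1>.
  Lent beta u a a' j j' is the matrix entry <a|_a <j|_j L_aj(u) |a'>_a |j'>_j.\<close>

definition Lent :: "complex \<Rightarrow> complex \<Rightarrow> bool \<Rightarrow> bool \<Rightarrow> bool \<Rightarrow> bool \<Rightarrow> complex" where
  "Lent beta u a a' j j' =
     (if \<not> a \<and> \<not> j \<and> \<not> a' \<and> \<not> j' then u
      else if a \<and> \<not> j \<and> \<not> a' \<and> j' then 1
      else if \<not> a \<and> j \<and> a' \<and> \<not> j' then 1
      else if a \<and> \<not> j \<and> a' \<and> \<not> j' then - u / beta - inverse u
      else if a \<and> j \<and> a' \<and> j' then - u / beta
      else 0)"

text \<open>Tm beta u k X Y a a' = <a|_a <X| L_{ak}(u) ... L_{a1}(u) |a'>_a |Y>, restricted to sites 1..k;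
  X, Y are the sets of sites carrying |1>.\<close>

fun Tm :: "complex \<Rightarrow> complex \<Rightarrow> nat \<Rightarrow> nat set \<Rightarrow> nat set \<Rightarrow> bool \<Rightarrow> bool \<Rightarrow> complex" where
  "Tm beta u 0 X Y a a' = (if a = a' then 1 else 0)"
| "Tm beta u (Suc k) X Y a a' =
     (\<Sum>b\<in>UNIV. Lent beta u a b (Suc k \<in> X) (Suc k \<in> Y) * Tm beta u k X Y b a')"

definition Bel :: "complex \<Rightarrow> nat \<Rightarrow> complex \<Rightarrow> nat set \<Rightarrow> nat set \<Rightarrow> complex" where
  "Bel beta M u X Y = Tm beta u M X Y False True"

definition Cel :: "complex \<Rightarrow> nat \<Rightarrow> complex \<Rightarrow> nat set \<Rightarrow> nat set \<Rightarrow> complex" where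
  "Cel beta M u X Y = Tm beta u M X Y True False"

definition Gfun :: "nat \<Rightarrow> (nat \<Rightarrow> int) \<Rightarrow> (nat \<Rightarrow> int) \<Rightarrow> complex \<Rightarrow> complex \<Rightarrow> complex" where
  "Gfun N mu lam z beta =
     (if (\<forall>j\<in>{1..N}. mu j \<ge> lam j \<and> lam j \<ge> mu (j+1))
      then z powi ((\<Sum>j=1..N+1. mu j) - (\<Sum>j=1..N. lam j)) *
           (\<Prod>j=1..N. 1 + beta * z - beta * z * (if mu (j+1) = lam j then 1 else 0))
      else 0)"

end

(* L_aj conserves the number of |1>'s in W_a (x) V_j, so in a matrix element of T_a(u) the
   auxiliary state between consecutive sites is forced: after the sites 1..i it is |1> exactly
   when #(Y inter [1,i]) - #(X inter [1,i]) = 1.  Such a path exists iff y_1 < x_1 <= y_2 < ... <= y_{N+1},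
   and its weight is the monomial (-u/beta)^#(X inter Y) u^#(empty sites) z^#(empty sites with |1>
   in W_a), since -u/beta - 1/u = u z; counting sites turns it into G_{mu^v/lambda^v}(z; beta).
   The reflection identity holds because L is unchanged when in- and out-states are exchanged in
   both factors at once, so reversing the order of the sites transposes T_a(u). *)

theory Submission
  imports Defs
begin

lemma Lent_swap: "Lent beta u a b j j' = Lent beta u b a j' j"
  by (cases a; cases b; cases j; cases j') (simp_all add: Lent_def)

lemma Tm_cong:
  assumes "\<And>i. i \<in> {1..k} \<Longrightarrow> (i \<in> X \<longleftrightarrow> i \<in> X') \<and> (i \<in> Y \<longleftrightarrow> i \<in> Y')"
  shows "Tm beta u k X Y a a' = Tm beta u k X' Y' a a'"
  using assms by (induction k arbitrary: a) auto

lemma Tm_Suc_first_site: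
  "Tm beta u (Suc k) X Y a a' =
     (\<Sum>c\<in>UNIV. Tm beta u k (Suc -` X) (Suc -` Y) a c * Lent beta u c a' (1 \<in> X) (1 \<in> Y))"
proof (induction k arbitrary: a)
  case 0
  then show ?case by (simp add: UNIV_bool)
next
  case (Suc k)
  have "Tm beta u (Suc (Suc k)) X Y a a' =
     (\<Sum>b\<in>UNIV. Lent beta u a b (Suc (Suc k) \<in> X) (Suc (Suc k) \<in> Y) *
        (\<Sum>c\<in>UNIV. Tm beta u k (Suc -` X) (Suc -` Y) b c * Lent beta u c a' (1 \<in> X) (1 \<in> Y)))"
    by (subst Tm.simps(2)) (simp only: Suc.IH)
  also have "\<dots> = (\<Sum>c\<in>UNIV. Tm beta u (Suc k) (Suc -` X) (Suc -` Y) a c * Lent beta u c a' (1 \<in> X) (1 \<in> Y))"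
    by (simp add: UNIV_bool algebra_simps)
  finally show ?case .
qed

lemma Tm_reverse:
  "Tm beta u k X Y a a' = Tm beta u k ((\<lambda>i. k + 1 - i) -` Y) ((\<lambda>i. k + 1 - i) -` X) a' a"
proof (induction k arbitrary: a)
  case 0
  then show ?case by simp
next
  case (Suc k)
  have "Tm beta u (Suc k) ((\<lambda>i. Suc k + 1 - i) -` Y) ((\<lambda>i. Suc k + 1 - i) -` X) a' a =
     (\<Sum>c\<in>UNIV. Tm beta u k ((\<lambda>i. k + 1 - i) -` Y) ((\<lambda>i. k + 1 - i) -` X) a' c *
        Lent beta u c a (Suc k \<in> Y) (Suc k \<in> X))"
    by (subst Tm_Suc_first_site) (simp add: vimage_def)
  also have "\<dots> = Tm beta u (Suc k) X Y a a'"
    by (subst Tm.simps(2)) (simp add: Suc.IH Lent_swap[of beta u _ a] mult.commute)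
  finally show ?case ..
qed

lemma Cel_reflect:
  assumes "X \<subseteq> {1..M}" "Y \<subseteq> {1..M}"
  shows "Cel beta M u ((\<lambda>i. M + 1 - i) ` X) ((\<lambda>i. M + 1 - i) ` Y) = Bel beta M u Y X"
proof -
  have reflect: "M + 1 - i \<in> (\<lambda>i. M + 1 - i) ` Z \<longleftrightarrow> i \<in> Z" if "Z \<subseteq> {1..M}" "i \<in> {1..M}" for Z i
  proof
    assume "M + 1 - i \<in> (\<lambda>i. M + 1 - i) ` Z"
    then obtain i' where "i' \<in> Z" "M + 1 - i = M + 1 - i'" by auto
    with that show "i \<in> Z" by (metis atLeastAtMost_iff diff_diff_cancel le_SucI subsetD Suc_eq_plus1)
  qed auto
  show ?thesis
    unfolding Cel_def Bel_def
    by (subst Tm_reverse, rule Tm_cong) (simp only: vimage_eq reflect assms)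
qed

lemma image_reverse_interval: "(\<lambda>j. f (n + 1 - j)) ` {1..n} = f ` {1..(n::nat)}"
proof -
  have "(\<lambda>j. n + 1 - j) ` {1..n} = {1..n}"
  proof (intro equalityI subsetI)
    fix i assume "i \<in> {1..n}"
    then show "i \<in> (\<lambda>j. n + 1 - j) ` {1..n}"
      by (intro image_eqI[where x = "n + 1 - i"]) auto
  qed auto
  then show ?thesis
    by (metis image_image)
qed

(* Support of L: it conserves a + j = b + j' and has no s_a n_j term. *)
definition admissible :: "bool \<Rightarrow> bool \<Rightarrow> bool \<Rightarrow> bool \<Rightarrow> bool" where
  "admissible a b j j' \<longleftrightarrow>
     (\<not> a \<and> \<not> b \<and> \<not> j \<and> \<not> j') \<or> (a \<and> \<not> b \<and> \<not> j \<and> j') \<or> (\<not> a \<and> b \<and> j \<and> \<not> j') \<or> (a \<and> b \<and> (j \<longleftrightarrow> j'))"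

lemma Lent_eq_0_if_not_admissible: "\<not> admissible a b j j' \<Longrightarrow> Lent beta u a b j j' = 0"
  by (cases a; cases b; cases j; cases j') (simp_all add: Lent_def admissible_def)

lemma admissible_unique: "admissible a b j j' \<Longrightarrow> admissible a c j j' \<Longrightarrow> c = b"
  by (cases a; cases b; cases c; cases j; cases j') (simp_all add: admissible_def)

lemma admissible_conserves:
  "admissible a b j j' \<Longrightarrow> (of_bool a :: int) + of_bool j = of_bool b + of_bool j'"
  by (cases a; cases b; cases j; cases j') (simp_all add: admissible_def)

lemma Lent_admissible_factors:
  assumes "admissible a b j j'" "u \<noteq> 0"
  shows "Lent beta u a b j j' =
    (if j \<and> j' then - u / beta else 1) * (if \<not> j \<and> \<not> j' then u else 1) *
    (if \<not> j \<and> \<not> j' \<and> a then - inverse beta - inverse (u\<^sup>2) else 1)"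
proof -
  have "- (u / beta) - inverse u = u * (- inverse beta - inverse (u\<^sup>2))"
    using assms(2) by (simp add: right_diff_distrib power2_eq_square divide_inverse)
  with assms(1) show ?thesis
    by (cases a; cases b; cases j; cases j') (simp_all add: Lent_def admissible_def)
qed

(* p i is the auxiliary state once L_{a i} ... L_{a 1} have acted on |0>. *)
definition admissible_path :: "nat set \<Rightarrow> nat set \<Rightarrow> nat \<Rightarrow> (nat \<Rightarrow> bool) \<Rightarrow> bool" where
  "admissible_path X Y k p \<longleftrightarrow>
     \<not> p 0 \<and> (\<forall>i\<in>{1..k}. admissible (p i) (p (i - 1)) (i \<in> X) (i \<in> Y))"

lemma admissible_path_Suc:
  "admissible_path X Y (Suc k) p \<longleftrightarrow>
     admissible_path X Y k p \<and> admissible (p (Suc k)) (p k) (Suc k \<in> X) (Suc k \<in> Y)"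
  by (simp add: admissible_path_def atLeastAtMostSuc_conv conj_ac)

lemma Tm_admissible_path:
  assumes "admissible_path X Y k p"
  shows "Tm beta u k X Y (p k) False = (\<Prod>i=1..k. Lent beta u (p i) (p (i - 1)) (i \<in> X) (i \<in> Y))"
  using assms
proof (induction k)
  case 0
  then show ?case by (simp add: admissible_path_def)
next
  case (Suc k)
  then have path: "admissible_path X Y k p"
    and step: "admissible (p (Suc k)) (p k) (Suc k \<in> X) (Suc k \<in> Y)"
    by (simp_all add: admissible_path_Suc)
  have "Lent beta u (p (Suc k)) (\<not> p k) (Suc k \<in> X) (Suc k \<in> Y) = 0"
    using step admissible_unique by (blast intro: Lent_eq_0_if_not_admissible)
  then have "Tm beta u (Suc k) X Y (p (Suc k)) False =
      Lent beta u (p (Suc k)) (p k) (Suc k \<in> X) (Suc k \<in> Y) * Tm beta u k X Y (p k) False"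
    by (cases "p k") (simp_all add: UNIV_bool)
  then show ?case
    using Suc.IH[OF path] by (simp add: prod.nat_ivl_Suc' mult.commute)
qed

lemma Tm_nonzero_imp_admissible_path:
  "Tm beta u k X Y a False \<noteq> 0 \<Longrightarrow> \<exists>p. admissible_path X Y k p \<and> p k = a"
proof (induction k arbitrary: a)
  case 0
  then show ?case
    by (intro exI[of _ "\<lambda>_. False"]) (simp add: admissible_path_def split: if_splits)
next
  case (Suc k)
  obtain c where c: "Lent beta u a c (Suc k \<in> X) (Suc k \<in> Y) \<noteq> 0" "Tm beta u k X Y c False \<noteq> 0"
    using Suc.prems unfolding Tm.simps(2) by (metis (no_types, lifting) sum.neutral mult_eq_0_iff)
  obtain p where p: "admissible_path X Y k p" "p k = c"
    using Suc.IH[OF c(2)] by blast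
  have "admissible_path X Y (Suc k) (p(Suc k := a))"
  proof -
    have "admissible_path X Y k (p(Suc k := a))"
      using p(1) by (auto simp: admissible_path_def)
    then show ?thesis
      using c(1) p(2) Lent_eq_0_if_not_admissible by (fastforce simp: admissible_path_Suc)
  qed
  then show ?case by force
qed

definition height :: "nat set \<Rightarrow> nat set \<Rightarrow> nat \<Rightarrow> int" where
  "height X Y i = int (card (Y \<inter> {1..i})) - int (card (X \<inter> {1..i}))"

lemma card_Int_atLeastAtMost_Suc:
  "card (Z \<inter> {1..Suc i}) = card (Z \<inter> {1..i}) + of_bool (Suc i \<in> Z)"
proof -
  have "Z \<inter> {1..Suc i} = (if Suc i \<in> Z then insert (Suc i) (Z \<inter> {1..i}) else Z \<inter> {1..i})"
    by (auto simp: le_Suc_eq)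
  then show ?thesis by simp
qed

lemma height_0 [simp]: "height X Y 0 = 0"
  by (simp add: height_def)

lemma height_Suc: "height X Y (Suc i) = height X Y i + of_bool (Suc i \<in> Y) - of_bool (Suc i \<in> X)"
  unfolding height_def card_Int_atLeastAtMost_Suc by simp

lemma admissible_path_height:
  assumes "admissible_path X Y k p" "i \<le> k"
  shows "of_bool (p i) = height X Y i"
  using assms(2)
proof (induction i)
  case 0
  then show ?case using assms(1) by (simp add: admissible_path_def)
next
  case (Suc i)
  have "admissible (p (Suc i)) (p i) (Suc i \<in> X) (Suc i \<in> Y)"
    using assms(1) Suc.prems unfolding admissible_path_def by (auto dest!: bspec[where x = "Suc i"])
  from admissible_conserves[OF this] show ?case
    using Suc by (simp add: height_Suc)
qed

definition admissible_heights :: "nat set \<Rightarrow> nat set \<Rightarrow> nat \<Rightarrow> bool" where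
  "admissible_heights X Y k \<longleftrightarrow>
     (\<forall>i\<le>k. height X Y i \<in> {0, 1}) \<and> (\<forall>i\<in>{1..k}. i \<in> X \<longrightarrow> i \<in> Y \<longrightarrow> height X Y i = 1)"

lemma admissible_path_imp_heights:
  assumes path: "admissible_path X Y k p"
  shows "admissible_heights X Y k"
  unfolding admissible_heights_def
proof (intro conjI ballI allI impI)
  fix i assume "i \<le> k"
  then show "height X Y i \<in> {0, 1}"
    using admissible_path_height[OF path] by (metis insert_iff of_bool_eq(1,2))
next
  fix i assume i: "i \<in> {1..k}" "i \<in> X" "i \<in> Y"
  then have "p i"
    using path by (auto simp: admissible_path_def admissible_def)
  then show "height X Y i = 1"
    using admissible_path_height[OF path] i by force
qed

lemma Tm_eq_0_unless_admissible_heights: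
  "\<not> admissible_heights X Y k \<Longrightarrow> Tm beta u k X Y a False = 0"
  using Tm_nonzero_imp_admissible_path admissible_path_imp_heights by blast

lemma admissible_heights_path:
  assumes heights: "admissible_heights X Y k"
  shows "admissible_path X Y k (\<lambda>i. height X Y i = 1)"
  unfolding admissible_path_def
proof (intro conjI ballI)
  fix i assume i: "i \<in> {1..k}"
  then obtain i' where i': "i = Suc i'" by (cases i) auto
  have "height X Y i' \<in> {0, 1}" "height X Y i \<in> {0, 1}"
    using heights i i' by (auto simp: admissible_heights_def)
  moreover have "i \<in> X \<Longrightarrow> i \<in> Y \<Longrightarrow> height X Y i = 1"
    using heights i by (auto simp: admissible_heights_def)
  ultimately show "admissible (height X Y i = 1) (height X Y (i - 1) = 1) (i \<in> X) (i \<in> Y)"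
    unfolding i' by (cases "Suc i' \<in> X"; cases "Suc i' \<in> Y") (auto simp: height_Suc admissible_def)
qed simp

lemma Tm_admissible_heights_monomial:
  assumes heights: "admissible_heights X Y k" and top: "height X Y k = 1" and u: "u \<noteq> 0"
  shows "Tm beta u k X Y True False =
    (- u / beta) ^ card {i\<in>{1..k}. i \<in> X \<and> i \<in> Y} * u ^ card {i\<in>{1..k}. i \<notin> X \<and> i \<notin> Y} *
    (- inverse beta - inverse (u\<^sup>2)) ^ card {i\<in>{1..k}. i \<notin> X \<and> i \<notin> Y \<and> height X Y i = 1}"
proof -
  let ?p = "\<lambda>i. height X Y i = 1"
  have path: "admissible_path X Y k ?p"
    by (rule admissible_heights_path[OF heights])
  have "Tm beta u k X Y True False = (\<Prod>i=1..k. Lent beta u (?p i) (?p (i - 1)) (i \<in> X) (i \<in> Y))"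
    using Tm_admissible_path[OF path, of beta u] top by simp
  also have "\<dots> = (\<Prod>i=1..k. (if i \<in> X \<and> i \<in> Y then - u / beta else 1) *
      (if i \<notin> X \<and> i \<notin> Y then u else 1) *
      (if i \<notin> X \<and> i \<notin> Y \<and> ?p i then - inverse beta - inverse (u\<^sup>2) else 1))"
    using path u by (intro prod.cong refl) (simp add: admissible_path_def Lent_admissible_factors)
  finally show ?thesis
    by (simp add: prod.distrib prod.inter_filter[symmetric])
qed

lemma admissible_heights_sum:
  assumes heights: "admissible_heights X Y k" and Y: "Y \<subseteq> {1..k}"
  shows "(\<Sum>i=1..k. height X Y i) =
    int (card {i\<in>{1..k}. i \<notin> X \<and> i \<notin> Y \<and> height X Y i = 1}) + int (card Y)"
proof -
  let ?E = "{i\<in>{1..k}. i \<notin> X \<and> i \<notin> Y \<and> height X Y i = 1}"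
  have path: "admissible_path X Y k (\<lambda>i. height X Y i = 1)"
    by (rule admissible_heights_path[OF heights])
  have "{i\<in>{1..k}. height X Y i = 1} = ?E \<union> Y"
    using path Y by (auto simp: admissible_path_def admissible_def)
  then have card: "card {i\<in>{1..k}. height X Y i = 1} = card ?E + card Y"
    by (simp only:) (rule card_Un_disjoint, auto intro: finite_subset[OF Y])
  have "(\<Sum>i=1..k. height X Y i) = (\<Sum>i=1..k. of_bool (height X Y i = 1))"
    using heights by (intro sum.cong refl) (auto simp: admissible_heights_def)
  also have "\<dots> = int (card {i\<in>{1..k}. height X Y i = 1})"
    by (simp add: Int_def conj_commute)
  finally show ?thesis
    using card by simp
qed

lemma sum_card_Int_atLeastAtMost:
  assumes "Y \<subseteq> {1..k}"
  shows "(\<Sum>i=1..k. card (Y \<inter> {1..i})) = (\<Sum>y\<in>Y. k + 1 - y)"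
proof -
  have "(\<Sum>i=1..k. card (Y \<inter> {1..i})) = (\<Sum>i=1..k. card {y\<in>Y. y \<le> i})"
    using assms by (intro sum.cong refl arg_cong[where f = card]) auto
  also have "\<dots> = (\<Sum>y\<in>Y. k + 1 - y)"
  proof (rule sum_multicount_gen)
    show "\<forall>y\<in>Y. card {i\<in>{1..k}. y \<le> i} = k + 1 - y"
    proof
      fix y assume "y \<in> Y"
      then have "{i\<in>{1..k}. y \<le> i} = {y..k}" using assms by auto
      then show "card {i\<in>{1..k}. y \<le> i} = k + 1 - y" by simp
    qed
  qed (use assms finite_subset in auto)
  finally show ?thesis .
qed

lemma sum_height:
  assumes "X \<subseteq> {1..k}" "Y \<subseteq> {1..k}"
  shows "(\<Sum>i=1..k. height X Y i) = (\<Sum>y\<in>Y. int (k + 1 - y)) - (\<Sum>x\<in>X. int (k + 1 - x))"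
  unfolding height_def sum_subtractf
  by (simp only: of_nat_sum[symmetric] sum_card_Int_atLeastAtMost assms)

lemma sum_reflected_image:
  fixes f :: "nat \<Rightarrow> nat"
  assumes "inj_on f A" "f ` A \<subseteq> {1..M}"
  shows "(\<Sum>i\<in>f ` A. int (M + 1 - i)) = int (card A) * (int M + 1) - (\<Sum>j\<in>A. int (f j))"
proof -
  have "(\<Sum>i\<in>f ` A. int (M + 1 - i)) = (\<Sum>j\<in>A. (int M + 1) - int (f j))"
    using assms by (auto simp: sum.reindex image_subset_iff of_nat_diff intro!: sum.cong)
  also have "\<dots> = int (card A) * (int M + 1) - (\<Sum>j\<in>A. int (f j))"
    by (simp add: sum_subtractf)
  finally show ?thesis .
qed

lemma strict_mono_on_atLeastAtMost_stepI:
  fixes f :: "nat \<Rightarrow> 'a::order"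
  assumes "\<forall>j\<in>{1..<n}. f j < f (j + 1)"
  shows "strict_mono_on {1..n} f"
proof (rule strict_mono_onI)
  fix r s assume rs: "r \<in> {1..n}" "s \<in> {1..n}" "r < s"
  show "f r < f s"
  proof (rule lift_Suc_mono_less_ivl[where N = "{1..<n}"])
    show "f m < f (Suc m)" if "m \<in> {1..<n}" for m
      using assms that by simp
  qed (use rs in auto)
qed

lemma card_image_Int_atLeastAtMost:
  assumes "inj_on f A" "\<forall>j\<in>A. 1 \<le> f j"
  shows "card (f ` A \<inter> {1..i}) = card {j\<in>A. f j \<le> i}"
proof -
  have "f ` A \<inter> {1..i} = f ` {j\<in>A. f j \<le> i}"
    using assms(2) by auto
  then show ?thesis
    using assms(1) by (simp add: card_image inj_on_subset)
qed

lemma card_sublevel_strict_mono_on: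
  fixes f :: "nat \<Rightarrow> nat"
  assumes mono: "strict_mono_on {1..n} f" and a: "a \<in> {1..n}"
  shows card_sublevel_ge: "f a \<le> i \<Longrightarrow> a \<le> card {j\<in>{1..n}. f j \<le> i}"
    and card_sublevel_less: "i < f a \<Longrightarrow> card {j\<in>{1..n}. f j \<le> i} < a"
    and card_sublevel_eq: "card {j\<in>{1..n}. f j \<le> f a} = a"
proof -
  have eq: "{j\<in>{1..n}. f j \<le> f a} = {1..a}"
    using a strict_mono_on_less_eq[OF mono] by auto
  then show "card {j\<in>{1..n}. f j \<le> f a} = a"
    by simp
  show "a \<le> card {j\<in>{1..n}. f j \<le> i}" if "f a \<le> i"
  proof -
    have "{1..a} \<subseteq> {j\<in>{1..n}. f j \<le> i}"
      using eq that by (blast intro: order_trans)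
    then have "card {1..a} \<le> card {j\<in>{1..n}. f j \<le> i}"
      by (rule card_mono[rotated]) simp
    then show ?thesis
      by simp
  qed
  show "card {j\<in>{1..n}. f j \<le> i} < a" if "i < f a"
  proof -
    have "{j\<in>{1..n}. f j \<le> i} \<subseteq> {1..<a}"
    proof
      fix j assume j: "j \<in> {j\<in>{1..n}. f j \<le> i}"
      then have "f j < f a"
        using that by simp
      then show "j \<in> {1..<a}"
        using j a strict_mono_on_less[OF mono, of j a] by simp
    qed
    then have "card {j\<in>{1..n}. f j \<le> i} \<le> card {1..<a}"
      by (rule card_mono[rotated]) simp
    also have "\<dots> < a"
      using a by simp
    finally show ?thesis .
  qed
qed

lemma prefactor_monomial:
  fixes u beta :: complex
  assumes u: "u \<noteq> 0" and beta: "beta \<noteq> 0" and sites: "A + 2 * N + 1 = M + C" and "C \<le> N"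
  shows "(- beta) ^ N * u powi (1 - int M) * ((- u / beta) ^ C * u ^ A) =
    (1 + beta * (- inverse beta - inverse (u\<^sup>2))) ^ (N - C)"
proof -
  obtain K where K: "N = C + K"
    using \<open>C \<le> N\<close> le_Suc_ex by blast
  have "1 - int M = - int (A + C + 2 * K)"
    using sites K by simp
  then have pow: "u powi (1 - int M) = inverse (u ^ (A + C + 2 * K))"
    by (simp only: power_int_minus power_int_of_nat)
  have "(- beta) ^ C * (- u / beta) ^ C = u ^ C"
    using beta by (simp add: power_mult_distrib[symmetric])
  then have "(- beta) ^ N * u powi (1 - int M) * ((- u / beta) ^ C * u ^ A)
      = (- beta) ^ K * (u ^ (A + C) * inverse (u ^ (A + C) * u ^ (2 * K)))"
    unfolding K pow by (simp add: power_add algebra_simps)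
  also have "\<dots> = (- beta) ^ K * inverse (u ^ (2 * K))"
    using u by (simp add: inverse_mult_distrib)
  also have "\<dots> = (- beta * inverse (u\<^sup>2)) ^ K"
    by (simp only: power_mult_distrib power_mult power_inverse)
  also have "- beta * inverse (u\<^sup>2) = 1 + beta * (- inverse beta - inverse (u\<^sup>2))"
    using beta by (simp add: algebra_simps)
  finally show ?thesis
    using K by simp
qed

definition interlaces :: "nat \<Rightarrow> (nat \<Rightarrow> nat) \<Rightarrow> (nat \<Rightarrow> nat) \<Rightarrow> bool" where
  "interlaces N x y \<longleftrightarrow> (\<forall>j\<in>{1..N}. y j < x j \<and> x j \<le> y (j + 1))"

context
  fixes M N :: nat and x y :: "nat \<Rightarrow> nat"
  assumes x_mono: "strict_mono_on {1..N} x" and y_mono: "strict_mono_on {1..N+1} y"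
    and x_range: "x ` {1..N} \<subseteq> {1..M}" and y_range: "y ` {1..N+1} \<subseteq> {1..M}"
begin

lemma height_positions:
  "height (x ` {1..N}) (y ` {1..N+1}) i =
     int (card {j\<in>{1..N+1}. y j \<le> i}) - int (card {j\<in>{1..N}. x j \<le> i})"
proof -
  have "\<forall>j\<in>{1..N}. 1 \<le> x j" "\<forall>j\<in>{1..N+1}. 1 \<le> y j"
    using x_range y_range by (auto simp: image_subset_iff)
  then show ?thesis
    unfolding height_def
    by (simp only: card_image_Int_atLeastAtMost strict_mono_on_imp_inj_on x_mono y_mono)
qed

lemma interlaces_match:
  assumes "interlaces N x y" "j \<in> {1..N}" "k \<in> {1..N+1}" "x j = y k"
  shows "k = j + 1"
proof -
  have "y j < x j" "x j \<le> y (j + 1)"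
    using assms(1,2) by (simp_all add: interlaces_def)
  then have "y j < y k" "y k \<le> y (j + 1)"
    using assms(4) by simp_all
  then have "j < k" "k \<le> j + 1"
    using assms(2,3) strict_mono_on_less[OF y_mono] strict_mono_on_less_eq[OF y_mono] by auto
  then show ?thesis by simp
qed

lemma interlaces_imp_admissible_heights:
  assumes inter: "interlaces N x y"
  shows "admissible_heights (x ` {1..N}) (y ` {1..N+1}) M"
  unfolding admissible_heights_def
proof (intro conjI allI ballI impI)
  fix i
  have "{j\<in>{1..N}. x j \<le> i} \<subseteq> {j\<in>{1..N+1}. y j \<le> i}"
  proof
    fix j assume j: "j \<in> {j\<in>{1..N}. x j \<le> i}"
    then have "y j < x j"
      using inter by (simp add: interlaces_def)
    with j show "j \<in> {j\<in>{1..N+1}. y j \<le> i}"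
      by simp
  qed
  then have lower: "card {j\<in>{1..N}. x j \<le> i} \<le> card {j\<in>{1..N+1}. y j \<le> i}"
    by (rule card_mono[rotated]) simp
  have "{j\<in>{1..N+1}. y j \<le> i} \<subseteq> insert 1 (Suc ` {j\<in>{1..N}. x j \<le> i})"
  proof
    fix j assume j: "j \<in> {j\<in>{1..N+1}. y j \<le> i}"
    show "j \<in> insert 1 (Suc ` {j\<in>{1..N}. x j \<le> i})"
    proof (cases j)
      case (Suc j')
      show ?thesis
      proof (cases "j' = 0")
        case False
        then have "j' \<in> {1..N}" "y j \<le> i"
          using j Suc by auto
        moreover have "x j' \<le> y j"
          using inter \<open>j' \<in> {1..N}\<close> Suc by (simp add: interlaces_def)
        ultimately show ?thesis
          using Suc by auto
      qed (use Suc in simp)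
    qed (use j in simp)
  qed
  then have "card {j\<in>{1..N+1}. y j \<le> i} \<le> card (insert 1 (Suc ` {j\<in>{1..N}. x j \<le> i}))"
    by (rule card_mono[rotated]) simp
  also have "\<dots> \<le> Suc (card {j\<in>{1..N}. x j \<le> i})"
    by (simp add: card_insert_if card_image)
  finally show "height (x ` {1..N}) (y ` {1..N+1}) i \<in> {0, 1}"
    using lower unfolding height_positions insert_iff singleton_iff by linarith
next
  fix i assume "i \<in> x ` {1..N}" "i \<in> y ` {1..N+1}"
  then obtain j k where j: "j \<in> {1..N}" "i = x j" and k: "k \<in> {1..N+1}" "i = y k"
    by blast
  then have "k = j + 1"
    using interlaces_match[OF inter] by simp
  then have "card {j'\<in>{1..N+1}. y j' \<le> i} = j + 1" "card {j'\<in>{1..N}. x j' \<le> i} = j"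
    using card_sublevel_eq[OF y_mono k(1)] card_sublevel_eq[OF x_mono j(1)] j(2) k(2) by simp_all
  then show "height (x ` {1..N}) (y ` {1..N+1}) i = 1"
    unfolding height_positions by simp
qed

lemma admissible_heights_imp_interlaces:
  assumes heights: "admissible_heights (x ` {1..N}) (y ` {1..N+1}) M"
  shows "interlaces N x y"
  unfolding interlaces_def
proof (intro ballI conjI)
  fix j assume j: "j \<in> {1..N}"
  then have jy: "j \<in> {1..N+1}" "j + 1 \<in> {1..N+1}" by auto
  let ?h = "height (x ` {1..N}) (y ` {1..N+1})"
  have h01: "?h i \<in> {0, 1}" if "i \<le> M" for i
    using heights that by (simp add: admissible_heights_def)
  have common: "\<forall>i\<in>{1..M}. i \<in> x ` {1..N} \<longrightarrow> i \<in> y ` {1..N+1} \<longrightarrow> ?h i = 1"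
    using heights unfolding admissible_heights_def by (rule conjunct2)
  have xM: "x j \<le> M" and yM: "y (j + 1) \<le> M"
    using j jy x_range y_range by (auto simp: image_subset_iff)
  show "y j < x j"
  proof (rule ccontr)
    assume "\<not> y j < x j"
    then consider "x j < y j" | "x j = y j" by linarith
    then show False
    proof cases
      case 1
      then have "?h (x j) < 0"
        using card_sublevel_ge[OF x_mono j, of "x j"] card_sublevel_less[OF y_mono jy(1), of "x j"]
        unfolding height_positions by simp
      then show False using h01[OF xM] by simp
    next
      case 2
      have "x j < y (j + 1)"
        using 2 strict_mono_onD[OF y_mono jy] by simp
      then have "?h (x j) \<le> 0"
        using card_sublevel_ge[OF x_mono j, of "x j"] card_sublevel_less[OF y_mono jy(2), of "x j"]
        unfolding height_positions by simp
      moreover have "?h (x j) = 1"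
      proof -
        have "x j \<in> {1..M}" "x j \<in> x ` {1..N}"
          using j x_range by (auto simp: image_subset_iff)
        moreover have "x j \<in> y ` {1..N+1}"
          unfolding 2 using jy by simp
        ultimately show ?thesis
          using common by blast
      qed
      ultimately show False by simp
    qed
  qed
  show "x j \<le> y (j + 1)"
  proof (rule ccontr)
    assume "\<not> x j \<le> y (j + 1)"
    then have "?h (y (j + 1)) > 1"
      using card_sublevel_ge[OF y_mono jy(2), of "y (j + 1)"] card_sublevel_less[OF x_mono j, of "y (j + 1)"]
      unfolding height_positions by simp
    then show False using h01[OF yM] by auto
  qed
qed

lemma card_Int_positions:
  assumes inter: "interlaces N x y"
  shows "card (x ` {1..N} \<inter> y ` {1..N+1}) = card {j\<in>{1..N}. x j = y (j + 1)}"
proof -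
  have "x ` {1..N} \<inter> y ` {1..N+1} = x ` {j\<in>{1..N}. x j = y (j + 1)}"
  proof (intro equalityI subsetI)
    fix i assume "i \<in> x ` {1..N} \<inter> y ` {1..N+1}"
    then obtain j k where jk: "j \<in> {1..N}" "k \<in> {1..N+1}" "i = x j" "x j = y k"
      by auto
    then have "j \<in> {j\<in>{1..N}. x j = y (j + 1)}"
      using interlaces_match[OF inter] by simp
    then show "i \<in> x ` {j\<in>{1..N}. x j = y (j + 1)}"
      using jk(3) by (rule rev_image_eqI)
  next
    fix i assume "i \<in> x ` {j\<in>{1..N}. x j = y (j + 1)}"
    then obtain j where j: "j \<in> {1..N}" "x j = y (j + 1)" "i = x j"
      by auto
    then have "i \<in> y ` {1..N+1}"
      by (intro image_eqI[where x = "j + 1"]) auto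
    with j show "i \<in> x ` {1..N} \<inter> y ` {1..N+1}"
      by blast
  qed
  moreover have "inj_on x {j\<in>{1..N}. x j = y (j + 1)}"
    by (rule inj_on_subset[OF strict_mono_on_imp_inj_on[OF x_mono]]) auto
  ultimately show ?thesis
    by (simp only: card_image)
qed

lemma card_positions: "card (x ` {1..N}) = N" "card (y ` {1..N+1}) = N + 1"
  using card_image[OF strict_mono_on_imp_inj_on[OF x_mono]]
    card_image[OF strict_mono_on_imp_inj_on[OF y_mono]] by simp_all

lemma card_vacant_positions:
  assumes inter: "interlaces N x y"
  shows "card {i\<in>{1..M}. i \<notin> x ` {1..N} \<and> i \<notin> y ` {1..N+1}} + 2 * N + 1 =
    M + card {j\<in>{1..N}. x j = y (j + 1)}"
proof -
  let ?X = "x ` {1..N}" and ?Y = "y ` {1..N+1}"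
  have "card (?X \<union> ?Y) + card {j\<in>{1..N}. x j = y (j + 1)} = 2 * N + 1"
    using card_Un_Int[of ?X ?Y] card_positions card_Int_positions[OF inter] by simp
  moreover have "{i\<in>{1..M}. i \<notin> ?X \<and> i \<notin> ?Y} = {1..M} - (?X \<union> ?Y)"
    by auto
  moreover have "card (?X \<union> ?Y) \<le> M"
    using card_mono[of "{1..M}" "?X \<union> ?Y"] x_range y_range by simp
  ultimately show ?thesis
    using x_range y_range by (simp add: card_Diff_subset)
qed

lemma card_vacant_height_one_positions:
  assumes inter: "interlaces N x y"
  shows "int (card {i\<in>{1..M}. i \<notin> x ` {1..N} \<and> i \<notin> y ` {1..N+1} \<and>
      height (x ` {1..N}) (y ` {1..N+1}) i = 1}) =
    int M - int N + (\<Sum>j=1..N. int (x j)) - (\<Sum>j=1..N+1. int (y j))"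
proof -
  let ?X = "x ` {1..N}" and ?Y = "y ` {1..N+1}"
  have heights: "admissible_heights ?X ?Y M"
    by (rule interlaces_imp_admissible_heights[OF inter])
  have "(\<Sum>i=1..M. height ?X ?Y i) =
      (int (N + 1) * (int M + 1) - (\<Sum>j=1..N+1. int (y j))) - (int N * (int M + 1) - (\<Sum>j=1..N. int (x j)))"
    using sum_height[OF x_range y_range]
      sum_reflected_image[OF strict_mono_on_imp_inj_on[OF x_mono] x_range]
      sum_reflected_image[OF strict_mono_on_imp_inj_on[OF y_mono] y_range]
    by simp
  then show ?thesis
    using admissible_heights_sum[OF heights y_range] card_positions(2) by (simp add: algebra_simps)
qed

lemma Cel_interlacing_monomial:
  fixes beta u :: complex
  assumes inter: "interlaces N x y" and u: "u \<noteq> 0"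
  shows "Cel beta M u (x ` {1..N}) (y ` {1..N+1}) =
    (- u / beta) ^ card {j\<in>{1..N}. x j = y (j + 1)} *
    u ^ card {i\<in>{1..M}. i \<notin> x ` {1..N} \<and> i \<notin> y ` {1..N+1}} *
    (- inverse beta - inverse (u\<^sup>2)) ^ card {i\<in>{1..M}. i \<notin> x ` {1..N} \<and> i \<notin> y ` {1..N+1} \<and>
      height (x ` {1..N}) (y ` {1..N+1}) i = 1}"
proof -
  let ?X = "x ` {1..N}" and ?Y = "y ` {1..N+1}"
  have heights: "admissible_heights ?X ?Y M"
    by (rule interlaces_imp_admissible_heights[OF inter])
  have "{j\<in>{1..N+1}. y j \<le> M} = {1..N+1}" "{j\<in>{1..N}. x j \<le> M} = {1..N}"
    using x_range y_range by auto
  then have top: "height ?X ?Y M = 1"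
    unfolding height_positions by simp
  have "{i\<in>{1..M}. i \<in> ?X \<and> i \<in> ?Y} = ?X \<inter> ?Y"
    using x_range by auto
  then show ?thesis
    using Tm_admissible_heights_monomial[OF heights top u, of beta] card_Int_positions[OF inter]
    by (simp add: Cel_def)
qed

lemma Cel_positions:
  fixes beta u :: complex
  assumes beta: "beta \<noteq> 0" and u: "u \<noteq> 0"
  shows "(- beta) ^ N * u powi (1 - int M) * Cel beta M u (x ` {1..N}) (y ` {1..N+1}) =
    (if interlaces N x y
     then (- inverse beta - inverse (u\<^sup>2)) powi (int M - int N + (\<Sum>j=1..N. int (x j)) - (\<Sum>j=1..N+1. int (y j))) *
       (1 + beta * (- inverse beta - inverse (u\<^sup>2))) ^ card {j\<in>{1..N}. x j \<noteq> y (j + 1)}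
     else 0)"
proof (cases "interlaces N x y")
  case False
  then have "\<not> admissible_heights (x ` {1..N}) (y ` {1..N+1}) M"
    using admissible_heights_imp_interlaces by blast
  with False show ?thesis
    by (simp add: Cel_def Tm_eq_0_unless_admissible_heights)
next
  case True
  let ?X = "x ` {1..N}" and ?Y = "y ` {1..N+1}" and ?z = "- inverse beta - inverse (u\<^sup>2)"
  define C where "C = card {j\<in>{1..N}. x j = y (j + 1)}"
  define A where "A = card {i\<in>{1..M}. i \<notin> ?X \<and> i \<notin> ?Y}"
  define B where "B = card {i\<in>{1..M}. i \<notin> ?X \<and> i \<notin> ?Y \<and> height ?X ?Y i = 1}"
  have sites: "A + 2 * N + 1 = M + C"
    unfolding A_def C_def by (rule card_vacant_positions[OF True])
  have "C \<le> card {1..N}"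
    unfolding C_def by (rule card_mono) auto
  then have "C \<le> N"
    by simp
  have "card {j\<in>{1..N}. x j \<noteq> y (j + 1)} = card ({1..N} - {j\<in>{1..N}. x j = y (j + 1)})"
    by (rule arg_cong[where f = card]) auto
  also have "\<dots> = N - C"
    unfolding C_def by (subst card_Diff_subset) auto
  finally have unmatched: "card {j\<in>{1..N}. x j \<noteq> y (j + 1)} = N - C" .
  have exponent: "int B = int M - int N + (\<Sum>j=1..N. int (x j)) - (\<Sum>j=1..N+1. int (y j))"
    unfolding B_def by (rule card_vacant_height_one_positions[OF True])
  have "(- beta) ^ N * u powi (1 - int M) * Cel beta M u ?X ?Y =
      ?z ^ B * ((- beta) ^ N * u powi (1 - int M) * ((- u / beta) ^ C * u ^ A))"
    unfolding Cel_interlacing_monomial[OF True u] A_def B_def C_def by (simp only: ac_simps)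
  also have "\<dots> = ?z powi int B * (1 + beta * ?z) ^ (N - C)"
    unfolding prefactor_monomial[OF u beta sites \<open>C \<le> N\<close>] by simp
  finally show ?thesis
    unfolding exponent unmatched using True by simp
qed

end

lemma Gfun_cong:
  assumes "\<And>j. j \<in> {1..N+1} \<Longrightarrow> mu j = mu' j" "\<And>j. j \<in> {1..N} \<Longrightarrow> lam j = lam' j"
  shows "Gfun N mu lam z beta = Gfun N mu' lam' z beta"
proof -
  have "(\<forall>j\<in>{1..N}. lam j \<le> mu j \<and> mu (j + 1) \<le> lam j) \<longleftrightarrow>
      (\<forall>j\<in>{1..N}. lam' j \<le> mu' j \<and> mu' (j + 1) \<le> lam' j)"
    using assms by auto
  moreover have "(\<Sum>j=1..N+1. mu j) = (\<Sum>j=1..N+1. mu' j)" "(\<Sum>j=1..N. lam j) = (\<Sum>j=1..N. lam' j)"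
    using assms by (auto intro: sum.cong)
  moreover have "(\<Prod>j=1..N. 1 + beta * z - beta * z * (if mu (j + 1) = lam j then 1 else 0)) =
      (\<Prod>j=1..N. 1 + beta * z - beta * z * (if mu' (j + 1) = lam' j then 1 else 0))"
    using assms by (auto intro: prod.cong)
  ultimately show ?thesis
    unfolding Gfun_def by simp
qed

lemma Gfun_positions:
  fixes x y :: "nat \<Rightarrow> nat" and c :: int
  shows "Gfun N (\<lambda>j. c - 1 + int j - int (y j)) (\<lambda>j. c + int j - int (x j)) z beta =
    (if interlaces N x y
     then z powi (c + (\<Sum>j=1..N. int (x j)) - (\<Sum>j=1..N+1. int (y j))) *
       (1 + beta * z) ^ card {j\<in>{1..N}. x j \<noteq> y (j + 1)}
     else 0)"
proof -
  have cond: "(\<forall>j\<in>{1..N}. c + int j - int (x j) \<le> c - 1 + int j - int (y j) \<and>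
        c - 1 + int (j + 1) - int (y (j + 1)) \<le> c + int j - int (x j)) \<longleftrightarrow> interlaces N x y"
    by (auto simp: interlaces_def)
  have sum: "(\<Sum>j=1..N+1. c - 1 + int j - int (y j)) - (\<Sum>j=1..N. c + int j - int (x j)) =
      c + (\<Sum>j=1..N. int (x j)) - (\<Sum>j=1..N+1. int (y j))"
    by (simp add: sum_subtractf sum.distrib algebra_simps)
  have "(\<Prod>j=1..N. 1 + beta * z - beta * z *
        (if c - 1 + int (j + 1) - int (y (j + 1)) = c + int j - int (x j) then 1 else 0)) =
      (\<Prod>j=1..N. if x j \<noteq> y (j + 1) then 1 + beta * z else 1)"
    by (intro prod.cong refl) auto
  also have "\<dots> = (1 + beta * z) ^ card {j\<in>{1..N}. x j \<noteq> y (j + 1)}"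
    by (simp add: prod.inter_filter[symmetric])
  finally have prod: "(\<Prod>j=1..N. 1 + beta * z - beta * z *
        (if c - 1 + int (j + 1) - int (y (j + 1)) = c + int j - int (x j) then 1 else 0)) =
      (1 + beta * z) ^ card {j\<in>{1..N}. x j \<noteq> y (j + 1)}" .
  show ?thesis
    unfolding Gfun_def cond sum prod ..
qed

lemma positions_of_partition:
  fixes lam :: "nat \<Rightarrow> int" and n K :: nat
  assumes decr: "\<forall>j\<in>{1..<n}. lam (j + 1) \<le> lam j" and nonneg: "\<forall>j\<in>{1..n}. 0 \<le> lam j"
    and top: "lam 1 \<le> int K" and x_def: "x = (\<lambda>j. nat (lam (n + 1 - j) + int j))"
  shows "\<forall>j\<in>{1..n}. int (x j) = lam (n + 1 - j) + int j"
    and "strict_mono_on {1..n} x"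
    and "x ` {1..n} \<subseteq> {1..K + n}"
proof -
  show int: "\<forall>j\<in>{1..n}. int (x j) = lam (n + 1 - j) + int j"
  proof
    fix j assume "j \<in> {1..n}"
    then have "0 \<le> lam (n + 1 - j)"
      by (intro nonneg[rule_format]) auto
    then show "int (x j) = lam (n + 1 - j) + int j"
      by (simp add: x_def)
  qed
  show "strict_mono_on {1..n} x"
  proof (rule strict_mono_on_atLeastAtMost_stepI, intro ballI)
    fix j assume j: "j \<in> {1..<n}"
    then have "n - j \<in> {1..<n}" "n + 1 - j = n - j + 1" "n + 1 - (j + 1) = n - j"
      by auto
    then have "lam (n + 1 - j) \<le> lam (n + 1 - (j + 1))"
      using decr by simp
    moreover have "j \<in> {1..n}" "j + 1 \<in> {1..n}"
      using j by auto
    then have "int (x j) = lam (n + 1 - j) + int j"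
      and "int (x (j + 1)) = lam (n + 1 - (j + 1)) + int (j + 1)"
      using int by blast+
    ultimately show "x j < x (j + 1)"
      by linarith
  qed
  show "x ` {1..n} \<subseteq> {1..K + n}"
  proof (intro subsetI, elim imageE)
    fix i j assume i: "i = x j" and j: "j \<in> {1..n}"
    have "lam (n + 1 - j) \<le> lam 1"
    proof (rule lift_Suc_antimono_le_ivl[where N = "{1..<n}"])
      show "lam (Suc m) \<le> lam m" if "m \<in> {1..<n}" for m
        using decr that by simp
    qed (use j in auto)
    moreover have "int (x j) = lam (n + 1 - j) + int j"
      using int j by blast
    moreover have "0 \<le> lam (n + 1 - j)"
      using j by (intro nonneg[rule_format]) auto
    ultimately have "1 \<le> int (x j)" "int (x j) \<le> int K + int n"
      using j top by auto
    then show "i \<in> {1..K + n}"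
      using i by simp
  qed
qed

lemma Cel_reflected_positions:
  fixes x y :: "nat \<Rightarrow> nat"
  assumes "x ` {1..N} \<subseteq> {1..M}" "y ` {1..N+1} \<subseteq> {1..M}"
  shows "Cel beta M u ((\<lambda>j. M + 1 - x (N + 1 - j)) ` {1..N}) ((\<lambda>j. M + 1 - y (N + 2 - j)) ` {1..N+1}) =
    Bel beta M u (y ` {1..N+1}) (x ` {1..N})"
proof -
  have "(\<lambda>j. M + 1 - x (N + 1 - j)) ` {1..N} = (\<lambda>i. M + 1 - i) ` x ` {1..N}"
    using image_reverse_interval[of "\<lambda>j. M + 1 - x j" N] by (simp add: image_image)
  moreover have "(\<lambda>j. M + 1 - y (N + 2 - j)) ` {1..N+1} = (\<lambda>i. M + 1 - i) ` y ` {1..N+1}"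
    using image_reverse_interval[of "\<lambda>j. M + 1 - y j" "N + 1"] by (simp add: image_image)
  ultimately show ?thesis
    using assms by (simp only: Cel_reflect)
qed

lemma Cel_partition_eq_Gfun:
  fixes lam mu :: "nat \<Rightarrow> int" and beta u :: complex
  assumes beta: "beta \<noteq> 0" and u: "u \<noteq> 0" and N: "N < M"
    and lam: "lam 1 \<le> int M - int N" "\<forall>j\<in>{1..<N}. lam (j + 1) \<le> lam j" "\<forall>j\<in>{1..N}. 0 \<le> lam j"
    and mu: "mu 1 \<le> int M - int N - 1" "\<forall>j\<in>{1..N}. mu (j + 1) \<le> mu j" "\<forall>j\<in>{1..N+1}. 0 \<le> mu j"
  shows "(- beta) ^ N * u powi (1 - int M) *
      Cel beta M u ((\<lambda>j. nat (lam (N + 1 - j) + int j)) ` {1..N})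
        ((\<lambda>j. nat (mu (N + 2 - j) + int j)) ` {1..N+1}) =
    Gfun N (\<lambda>j. int M - int N - 1 - mu (N + 2 - j)) (\<lambda>j. int M - int N - lam (N + 1 - j))
      (- inverse beta - inverse (u ^ 2)) beta"
proof -
  define x where "x = (\<lambda>j. nat (lam (N + 1 - j) + int j))"
  define y where "y = (\<lambda>j. nat (mu (N + 1 + 1 - j) + int j))"
  have "\<forall>j\<in>{1..<N}. lam (j + 1) \<le> lam j" "\<forall>j\<in>{1..N}. 0 \<le> lam j" "lam 1 \<le> int (M - N)"
    using lam N by auto
  note x_pos = positions_of_partition[OF this x_def]
  have "\<forall>j\<in>{1..<N+1}. mu (j + 1) \<le> mu j" "\<forall>j\<in>{1..N+1}. 0 \<le> mu j" "mu 1 \<le> int (M - N - 1)"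
    using mu N by auto
  note y_pos = positions_of_partition[OF this y_def]
  have range: "x ` {1..N} \<subseteq> {1..M}" "y ` {1..N+1} \<subseteq> {1..M}"
    using x_pos(3) y_pos(3) N by auto
  have "Gfun N (\<lambda>j. int M - int N - 1 - mu (N + 2 - j)) (\<lambda>j. int M - int N - lam (N + 1 - j))
      (- inverse beta - inverse (u\<^sup>2)) beta =
    Gfun N (\<lambda>j. (int M - int N) - 1 + int j - int (y j)) (\<lambda>j. (int M - int N) + int j - int (x j))
      (- inverse beta - inverse (u\<^sup>2)) beta"
    by (rule Gfun_cong) (use x_pos(1) y_pos(1) in \<open>auto simp: x_def y_def\<close>)
  also have "\<dots> = (- beta) ^ N * u powi (1 - int M) * Cel beta M u (x ` {1..N}) (y ` {1..N+1})"
    unfolding Gfun_positions by (rule Cel_positions[OF x_pos(2) y_pos(2) range beta u, symmetric])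
  finally show ?thesis
    by (simp add: x_def y_def)
qed

theorem mainTheorem5:
  fixes beta :: complex and M N :: nat
  assumes beta: "beta \<noteq> 0" and M: "M \<ge> 1" and N: "N \<le> M - 1"
  shows
   "(\<forall>(x::nat\<Rightarrow>nat) (y::nat\<Rightarrow>nat) (u::complex).
       (\<forall>j\<in>{1..N}. 1 \<le> x j \<and> x j \<le> M) \<and> (\<forall>j\<in>{1..<N}. x j < x (j+1)) \<and>
       (\<forall>j\<in>{1..N+1}. 1 \<le> y j \<and> y j \<le> M) \<and> (\<forall>j\<in>{1..N}. y j < y (j+1)) \<and>
       u \<noteq> 0 \<longrightarrow>
       Cel beta M u ((\<lambda>j. M + 1 - x (N + 1 - j)) ` {1..N})
                    ((\<lambda>j. M + 1 - y (N + 2 - j)) ` {1..N+1})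
       = Bel beta M u (y ` {1..N+1}) (x ` {1..N}))
  \<and>
   (\<forall>(lam::nat\<Rightarrow>int) (mu::nat\<Rightarrow>int) (u::complex).
       int M - int N \<ge> lam 1 \<and> (\<forall>j\<in>{1..<N}. lam j \<ge> lam (j+1)) \<and>
       (\<forall>j\<in>{1..N}. lam j \<ge> 0) \<and>
       int M - int N - 1 \<ge> mu 1 \<and> (\<forall>j\<in>{1..N}. mu j \<ge> mu (j+1)) \<and>
       (\<forall>j\<in>{1..N+1}. mu j \<ge> 0) \<and>
       u \<noteq> 0 \<longrightarrow>
       (- beta) ^ N * u powi (1 - int M) *
         Cel beta M u ((\<lambda>j. nat (lam (N + 1 - j) + int j)) ` {1..N})
                      ((\<lambda>j. nat (mu (N + 2 - j) + int j)) ` {1..N+1})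
       = Gfun N (\<lambda>j. int M - int N - 1 - mu (N + 2 - j)) (\<lambda>j. int M - int N - lam (N + 1 - j))
              (- inverse beta - inverse (u ^ 2)) beta)"
proof (intro conjI allI impI, goal_cases)
  case (1 x y u)
  then show ?case
    by (intro Cel_reflected_positions) auto
next
  case (2 lam mu u)
  have "N < M"
    using M N by simp
  with 2 show ?case
    using beta by (intro Cel_partition_eq_Gfun) auto
qed

end
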